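(* For every EIC problem $(R,B)$, $(D)_{(R,B)}\le 2\cdot (C)_{(R,B)}$.
   Context: An EIC problem is a pair $(R,B)$ of matrices in $\mathbb{F}_2^{n\times m}$ with disjoint supports; node $u\in[n]$ needs block $a\in[m]$ if $R_{ua}=1$ and has block $a$ if $B_{ua}=1$. Let $P=\{(u,a):R_{ua}=1\}$, $B_u$ the $u$-th row of $B$, $\mathrm{diag}(B_u)$ the diagonal matrix with $B_u$ on the diagonal, and $\boldsymbol e_a$ the $a$-th standard basis row vector of $\mathbb{F}_2^m$. A centralized linear broadcast solution is a matrix $\beta\in\mathbb{F}_2^{h\times m}$ such that for every $(u,a)\in P$ there is $\boldsymbol\alpha\in\mathbb{F}_2^{h+m}$ with $\boldsymbol e_a=\boldsymbol\alpha\cdot\left[\begin{smallmatrix}\beta\\ \mathrm{diag}(B_u)\end{smallmatrix}\right]$; its length is $h$, and $(C)_{(R,B)}$ is the minimum length of such a solution. A (decentralized) linear broadcast solution is a tuple of matrices $\beta^{(1)},\dots,\beta^{(n)}$ with $\beta^{(u)}\in\mathbb{F}_2^{h_u\times m}$ ($h_u\ge 0$) such that (i) for each $u$ and each $a$ with $B_{ua}=0$, the $a$-th column of $\beta^{(u)}$ is zero, and (ii) for each $(u,a)\in P$ there is $\boldsymbol\alpha\in\mathbb{F}_2^{\sum_\ell h_\ell+m}$ with $\boldsymbol e_a=\boldsymbol\alpha\cdot\left[\begin{smallmatrix}\beta^{(1)}\\ \vdots\\ \beta^{(n)}\\ \mathrm{diag}(B_u)\end{smallmatrix}\right]$. Its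 length is $\sum_u h_u$, and $(D)_{(R,B)}$ is the minimum length of such a solution. *)

theory Defs
  imports Main "HOL-Library.Z2"
begin

text \<open>Matrices over F_2 are functions nat => nat => bit, only entries with indices in
range are meaningful. R, B are n x m. Rows of a matrix are indexed first.\<close>

definition EIC_problem :: "nat \<Rightarrow> nat \<Rightarrow> (nat \<Rightarrow> nat \<Rightarrow> bit) \<Rightarrow> (nat \<Rightarrow> nat \<Rightarrow> bit) \<Rightarrow> bool" where
  "EIC_problem n m R B \<longleftrightarrow> (\<forall>u<n. \<forall>a<m. \<not> (R u a = 1 \<and> B u a = 1))"

definition needs :: "nat \<Rightarrow> nat \<Rightarrow> (nat \<Rightarrow> nat \<Rightarrow> bit) \<Rightarrow> (nat \<times> nat) set" where
  "needs n m R = {(u, a). u < n \<and> a < m \<and> R u a = 1}"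

definition e_vec :: "nat \<Rightarrow> nat \<Rightarrow> bit" where
  "e_vec a c = (if c = a then 1 else 0)"

text \<open>alpha \<cdot> [beta; diag(B_u)] at column c, beta an h x m matrix, alpha in F_2^(h+m)\<close>
definition cent_comb :: "nat \<Rightarrow> nat \<Rightarrow> (nat \<Rightarrow> nat \<Rightarrow> bit) \<Rightarrow> (nat \<Rightarrow> nat \<Rightarrow> bit) \<Rightarrow> nat
    \<Rightarrow> (nat \<Rightarrow> bit) \<Rightarrow> nat \<Rightarrow> bit" where
  "cent_comb m h \<beta> B u \<alpha> c =
     (\<Sum>i<h. \<alpha> i * \<beta> i c) + (\<Sum>j<m. \<alpha> (h + j) * (if j = c then B u c else 0))"

definition cent_solution :: "nat \<Rightarrow> nat \<Rightarrow> (nat \<Rightarrow> nat \<Rightarrow> bit) \<Rightarrow> (nat \<Rightarrow> nat \<Rightarrow> bit)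
    \<Rightarrow> nat \<Rightarrow> (nat \<Rightarrow> nat \<Rightarrow> bit) \<Rightarrow> bool" where
  "cent_solution n m R B h \<beta> \<longleftrightarrow>
     (\<forall>(u, a) \<in> needs n m R. \<exists>\<alpha>. \<forall>c<m. e_vec a c = cent_comb m h \<beta> B u \<alpha> c)"

definition C_opt :: "nat \<Rightarrow> nat \<Rightarrow> (nat \<Rightarrow> nat \<Rightarrow> bit) \<Rightarrow> (nat \<Rightarrow> nat \<Rightarrow> bit) \<Rightarrow> nat" where
  "C_opt n m R B = (LEAST h. \<exists>\<beta>. cent_solution n m R B h \<beta>)"

text \<open>Decentralized: node v (v < n) sends hs v rows; beta v i c is entry (i, c) of beta^(v).
  The stacked coefficient vector alpha is indexed by pairs (v, i) for the rows of
  beta^(1),...,beta^(n), and by j < m (via gam) for the rows of diag(B_u).\<close>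
definition dec_comb :: "nat \<Rightarrow> nat \<Rightarrow> (nat \<Rightarrow> nat) \<Rightarrow> (nat \<Rightarrow> nat \<Rightarrow> nat \<Rightarrow> bit)
    \<Rightarrow> (nat \<Rightarrow> nat \<Rightarrow> bit) \<Rightarrow> nat \<Rightarrow> (nat \<times> nat \<Rightarrow> bit) \<Rightarrow> (nat \<Rightarrow> bit) \<Rightarrow> nat \<Rightarrow> bit" where
  "dec_comb n m hs \<beta> B u \<alpha> \<gamma> c =
     (\<Sum>v<n. \<Sum>i<hs v. \<alpha> (v, i) * \<beta> v i c) + (\<Sum>j<m. \<gamma> j * (if j = c then B u c else 0))"

definition dec_solution :: "nat \<Rightarrow> nat \<Rightarrow> (nat \<Rightarrow> nat \<Rightarrow> bit) \<Rightarrow> (nat \<Rightarrow> nat \<Rightarrow> bit)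
    \<Rightarrow> (nat \<Rightarrow> nat) \<Rightarrow> (nat \<Rightarrow> nat \<Rightarrow> nat \<Rightarrow> bit) \<Rightarrow> bool" where
  "dec_solution n m R B hs \<beta> \<longleftrightarrow>
     (\<forall>v<n. \<forall>a<m. B v a = 0 \<longrightarrow> (\<forall>i<hs v. \<beta> v i a = 0)) \<and>
     (\<forall>(u, a) \<in> needs n m R. \<exists>\<alpha> \<gamma>. \<forall>c<m. e_vec a c = dec_comb n m hs \<beta> B u \<alpha> \<gamma> c)"

definition D_opt :: "nat \<Rightarrow> nat \<Rightarrow> (nat \<Rightarrow> nat \<Rightarrow> bit) \<Rightarrow> (nat \<Rightarrow> nat \<Rightarrow> bit) \<Rightarrow> nat" where
  "D_opt n m R B = (LEAST l. \<exists>hs \<beta>. dec_solution n m R B hs \<beta> \<and> (\<Sum>v<n. hs v) = l)"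

end

theory Submission
  imports Defs "HOL-Library.Function_Algebras" "HOL.Vector_Spaces"
begin

(* Let beta be an optimal centralized solution of length h. The words alpha * beta from which
   the nodes decode their requested blocks lie in the row space of beta, so at most h of them
   span all of them. Such a word w, decoded by node u into block a, agrees with e_a outside the
   blocks u has; hence u itself can broadcast w + e_a, and any holder of a can broadcast e_a.
   These 2h local messages generate every spanning word, hence every word the centralized
   decoders use. *)

lemma bit_add_self [simp]: "(x::bit) + x = 0"
  by (cases x) auto

lemma bit_eq_add_swap: "(a::bit) = b + c \<longleftrightarrow> b = a + c"
  by (cases a; cases b; cases c) auto

lemma sum_apply_fun: "(\<Sum>i\<in>A. f i) x = (\<Sum>i\<in>A. f i x)"
  by (induction A rule: infinite_finite_induct) (auto simp: zero_fun_def)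

lemma (in vector_space) spanning_subset_card_le:
  assumes "finite T" "S \<subseteq> span T"
  obtains S' where "S' \<subseteq> S" "finite S'" "card S' \<le> card T" "S \<subseteq> span S'"
proof -
  obtain S' where S': "S' \<subseteq> S" "independent S'" "S \<subseteq> span S'"
    by (rule maximal_independent_subset)
  with assms have "finite S' \<and> card S' \<le> card T"
    by (intro independent_span_bound) auto
  with S' that show ?thesis by blast
qed

interpretation bit_vec: vector_space "\<lambda>(c::bit) (f::nat \<Rightarrow> bit) x. c * f x"
  by unfold_locales (auto simp: fun_eq_iff algebra_simps)

lemma sum_diag_column:
  assumes "c < (m::nat)"
  shows "(\<Sum>j<m. (f j::bit) * (if j = c then x else 0)) = f c * x"
proof -
  have "(\<Sum>j<m. f j * (if j = c then x else 0)) = (\<Sum>j<m. if j = c then f c * x else 0)"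
    by (rule sum.cong) auto
  also have "\<dots> = f c * x"
    using assms by (subst sum.delta) auto
  finally show ?thesis .
qed

lemma cent_comb_eq:
  "c < m \<Longrightarrow> cent_comb m h \<beta> B u \<alpha> c = (\<Sum>i<h. \<alpha> i * \<beta> i c) + \<alpha> (h + c) * B u c"
  unfolding cent_comb_def by (subst sum_diag_column[where f = "\<lambda>j. \<alpha> (h + j)"]) auto

lemma dec_comb_eq:
  "c < m \<Longrightarrow>
    dec_comb n m hs \<beta> B u \<alpha> \<gamma> c = (\<Sum>v<n. \<Sum>i<hs v. \<alpha> (v, i) * \<beta> v i c) + \<gamma> c * B u c"
  unfolding dec_comb_def by (subst sum_diag_column[where f = \<gamma>]) auto

lemma cent_solution_identity: "cent_solution n m R B m (\<lambda>i c. e_vec i c)"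
  unfolding cent_solution_def
proof clarify
  fix u a
  assume "(u, a) \<in> needs n m R"
  then have "a < m" by (simp add: needs_def)
  have "e_vec a c = cent_comb m m (\<lambda>i c. e_vec i c) B u (e_vec a) c" if "c < m" for c
  proof -
    have "(\<Sum>i<m. e_vec a i * e_vec i c) = (\<Sum>i<m. if i = a then e_vec a c else 0)"
      by (rule sum.cong) (auto simp: e_vec_def)
    also have "\<dots> = e_vec a c"
      using \<open>a < m\<close> by (subst sum.delta) auto
    finally show ?thesis
      using that \<open>a < m\<close> by (simp add: cent_comb_eq e_vec_def)
  qed
  then show "\<exists>\<alpha>. \<forall>c<m. e_vec a c = cent_comb m m (\<lambda>i c. e_vec i c) B u \<alpha> c"
    by blast
qed

lemma cent_solution_C_opt: "\<exists>\<beta>. cent_solution n m R B (C_opt n m R B) \<beta>"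
  unfolding C_opt_def by (rule LeastI_ex) (use cent_solution_identity in blast)

lemma D_opt_le_card_of_messages:
  fixes t :: "'j \<Rightarrow> nat \<Rightarrow> bit" and sender :: "'j \<Rightarrow> nat"
  assumes "finite J"
    and sender: "\<And>j. j \<in> J \<Longrightarrow> sender j < n"
    and local: "\<And>j c. j \<in> J \<Longrightarrow> c < m \<Longrightarrow> B (sender j) c = 0 \<Longrightarrow> t j c = 0"
    and decode: "\<And>u a. (u, a) \<in> needs n m R \<Longrightarrow>
                   \<exists>\<mu> \<gamma>. \<forall>c<m. e_vec a c = (\<Sum>j\<in>J. \<mu> j * t j c) + \<gamma> c * B u c"
  shows "D_opt n m R B \<le> card J"
proof -
  define hs where "hs v = card {j \<in> J. sender j = v}" for v
  have "\<exists>G. bij_betw G {..<hs v} {j \<in> J. sender j = v}" for v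
    using ex_bij_betw_nat_finite[of "{j \<in> J. sender j = v}"] \<open>finite J\<close>
    by (auto simp: hs_def atLeast0LessThan)
  then obtain G where G: "\<And>v. bij_betw (G v) {..<hs v} {j \<in> J. sender j = v}"
    by metis
  have G_in: "G v i \<in> J" "sender (G v i) = v" if "i < hs v" for v i
    using G[of v] that by (auto simp: bij_betw_def)
  have regroup: "(\<Sum>v<n. \<Sum>i<hs v. F (G v i)) = (\<Sum>j\<in>J. F j)"
    for F :: "'j \<Rightarrow> 'z::comm_monoid_add"
  proof -
    have "(\<Sum>v<n. \<Sum>i<hs v. F (G v i)) = (\<Sum>v<n. \<Sum>j\<in>{j \<in> J. sender j = v}. F j)"
      by (intro sum.cong refl sum.reindex_bij_betw G)
    also have "\<dots> = (\<Sum>j\<in>J. F j)"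
      using \<open>finite J\<close> sender by (intro sum.group) auto
    finally show ?thesis .
  qed
  define \<beta> where "\<beta> v i = t (G v i)" for v i
  have "dec_solution n m R B hs \<beta>"
    unfolding dec_solution_def
  proof (intro conjI allI impI ballI; clarify?)
    fix v a i
    assume "a < m" "B v a = 0" "i < hs v"
    then show "\<beta> v i a = 0"
      using local[of "G v i" a] G_in[of i v] by (simp add: \<beta>_def)
  next
    fix u a
    assume "(u, a) \<in> needs n m R"
    then obtain \<mu> \<gamma> where "\<forall>c<m. e_vec a c = (\<Sum>j\<in>J. \<mu> j * t j c) + \<gamma> c * B u c"
      using decode by blast
    moreover have "dec_comb n m hs \<beta> B u (\<lambda>(v, i). \<mu> (G v i)) \<gamma> c
        = (\<Sum>j\<in>J. \<mu> j * t j c) + \<gamma> c * B u c" if "c < m" for c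
      using that regroup[of "\<lambda>j. \<mu> j * t j c"] by (simp only: dec_comb_eq \<beta>_def case_prod_conv)
    ultimately have "\<forall>c<m. e_vec a c = dec_comb n m hs \<beta> B u (\<lambda>(v, i). \<mu> (G v i)) \<gamma> c"
      by simp
    then show "\<exists>\<alpha> \<gamma>. \<forall>c<m. e_vec a c = dec_comb n m hs \<beta> B u \<alpha> \<gamma> c"
      by blast
  qed
  moreover have "(\<Sum>v<n. hs v) = card J"
    using regroup[of "\<lambda>_. 1::nat"] by simp
  ultimately show ?thesis
    unfolding D_opt_def by (intro Least_le) blast
qed

lemma D_opt_le_double_of_decodable_words:
  fixes w :: "'k \<Rightarrow> nat \<Rightarrow> bit" and node block :: "'k \<Rightarrow> nat"
  assumes "finite K"
    and needs: "\<And>x. x \<in> K \<Longrightarrow> (node x, block x) \<in> needs n m R"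
    and holders: "\<forall>(u, a) \<in> needs n m R. \<exists>v<n. B v a = 1"
    and agree: "\<And>x c. x \<in> K \<Longrightarrow> c < m \<Longrightarrow> B (node x) c = 0 \<Longrightarrow> w x c = e_vec (block x) c"
    and decode: "\<And>u a. (u, a) \<in> needs n m R \<Longrightarrow>
                   \<exists>\<mu> \<gamma>. \<forall>c<m. e_vec a c = (\<Sum>x\<in>K. \<mu> x * w x c) + \<gamma> c * B u c"
  shows "D_opt n m R B \<le> 2 * card K"
proof -
  define holder where "holder a = (SOME v. v < n \<and> B v a = 1)" for a
  have holder: "holder (block x) < n \<and> B (holder (block x)) (block x) = 1" if "x \<in> K" for x
    unfolding holder_def by (rule someI_ex) (use holders needs[OF that] in blast)
  \<comment> \<open>message Inl x is w x + e_(block x), sent by node x; Inr x is e_(block x), sent by a holder\<close>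
  define sender where "sender = case_sum node (\<lambda>x. holder (block x))"
  define t where "t = case_sum (\<lambda>x c. w x c + e_vec (block x) c) (\<lambda>x. e_vec (block x))"
  have "D_opt n m R B \<le> card (K <+> K)"
  proof (rule D_opt_le_card_of_messages[where sender = sender and t = t])
    show "sender j < n" if "j \<in> K <+> K" for j
      using that needs holder by (auto simp: sender_def needs_def)
    show "t j c = 0" if "j \<in> K <+> K" "c < m" "B (sender j) c = 0" for j c
      using that agree holder by (auto simp: sender_def t_def e_vec_def)
    fix u a
    assume "(u, a) \<in> needs n m R"
    then obtain \<mu> \<gamma> where \<mu>: "\<forall>c<m. e_vec a c = (\<Sum>x\<in>K. \<mu> x * w x c) + \<gamma> c * B u c"
      using decode by blast
    have "(\<Sum>j\<in>K <+> K. case_sum \<mu> \<mu> j * t j c) = (\<Sum>x\<in>K. \<mu> x * w x c)" for c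
    proof -
      have "(\<Sum>j\<in>K <+> K. case_sum \<mu> \<mu> j * t j c)
          = (\<Sum>x\<in>K. \<mu> x * (w x c + e_vec (block x) c)) + (\<Sum>x\<in>K. \<mu> x * e_vec (block x) c)"
        using \<open>finite K\<close> by (simp only: sum.Plus comp_def t_def sum.case)
      also have "\<dots> = (\<Sum>x\<in>K. \<mu> x * w x c)"
        by (simp only: distrib_left sum.distrib add.assoc bit_add_self add_0_right)
      finally show ?thesis .
    qed
    with \<mu> show "\<exists>\<mu> \<gamma>. \<forall>c<m. e_vec a c = (\<Sum>j\<in>K <+> K. \<mu> j * t j c) + \<gamma> c * B u c"
      by metis
  qed (use \<open>finite K\<close> in simp)
  then show ?thesis
    using \<open>finite K\<close> by (simp add: card_Plus)
qed

lemma cent_solution_decodable_words: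
  assumes sol: "cent_solution n m R B h \<beta>"
  obtains K :: "(nat \<Rightarrow> bit) set" and node block where
    "finite K" "card K \<le> h"
    "\<And>x. x \<in> K \<Longrightarrow> (node x, block x) \<in> needs n m R"
    "\<And>x c. x \<in> K \<Longrightarrow> c < m \<Longrightarrow> B (node x) c = 0 \<Longrightarrow> x c = e_vec (block x) c"
    "\<And>u a. (u, a) \<in> needs n m R \<Longrightarrow>
       \<exists>\<mu> \<gamma>. \<forall>c<m. e_vec a c = (\<Sum>x\<in>K. \<mu> x * x c) + \<gamma> c * B u c"
proof -
  define row where "row i c = (if c < m then \<beta> i c else 0)" for i c
  define word where "word \<alpha> c = (if c < m then \<Sum>i<h. \<alpha> i * \<beta> i c else 0)" for \<alpha> c
  define decodes where
    "decodes u a \<alpha> \<longleftrightarrow> (u, a) \<in> needs n m R \<and> (\<forall>c<m. e_vec a c = cent_comb m h \<beta> B u \<alpha> c)"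
    for u a \<alpha>
  have word_eq: "word \<alpha> c = e_vec a c + \<alpha> (h + c) * B u c"
    if "decodes u a \<alpha>" "c < m" for u a \<alpha> c
  proof -
    have "e_vec a c = cent_comb m h \<beta> B u \<alpha> c"
      using that by (simp add: decodes_def)
    also have "\<dots> = (\<Sum>i<h. \<alpha> i * \<beta> i c) + \<alpha> (h + c) * B u c"
      using \<open>c < m\<close> by (rule cent_comb_eq)
    finally have "e_vec a c = (\<Sum>i<h. \<alpha> i * \<beta> i c) + \<alpha> (h + c) * B u c" .
    then have "(\<Sum>i<h. \<alpha> i * \<beta> i c) = e_vec a c + \<alpha> (h + c) * B u c"
      by (rule bit_eq_add_swap[THEN iffD1])
    then show ?thesis
      using \<open>c < m\<close> by (simp only: word_def if_True)
  qed
  define W where "W = {word \<alpha> | u a \<alpha>. decodes u a \<alpha>}"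
  have word_rows: "word \<alpha> = (\<Sum>i<h. (\<lambda>c. \<alpha> i * row i c))" for \<alpha>
  proof (rule ext)
    show "word \<alpha> c = (\<Sum>i<h. (\<lambda>c. \<alpha> i * row i c)) c" for c
      unfolding word_def row_def sum_apply_fun
      by (cases "c < m") (simp_all only: if_True if_False mult_zero_right sum.neutral_const)
  qed
  have "word \<alpha> \<in> bit_vec.span (row ` {..<h})" for \<alpha>
    unfolding word_rows by (intro bit_vec.span_sum bit_vec.span_scale bit_vec.span_base) auto
  then have "W \<subseteq> bit_vec.span (row ` {..<h})"
    by (auto simp: W_def)
  with finite_imageI[OF finite_lessThan] obtain K
    where K: "K \<subseteq> W" "finite K" "card K \<le> card (row ` {..<h})" "W \<subseteq> bit_vec.span K"
    by (rule bit_vec.spanning_subset_card_le)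
  have "\<forall>x\<in>K. \<exists>u a \<alpha>. decodes u a \<alpha> \<and> word \<alpha> = x"
    using K(1) unfolding W_def by blast
  then obtain node block coef where
    chosen: "\<And>x. x \<in> K \<Longrightarrow> decodes (node x) (block x) (coef x)"
      "\<And>x. x \<in> K \<Longrightarrow> word (coef x) = x"
    by metis
  show thesis
  proof
    show "finite K" by (fact K(2))
    show "card K \<le> h"
      using K(3) card_image_le[of "{..<h}" row] by simp
    show "(node x, block x) \<in> needs n m R" if "x \<in> K" for x
      using chosen[OF that] by (simp add: decodes_def)
    show "x c = e_vec (block x) c" if "x \<in> K" "c < m" "B (node x) c = 0" for x c
      using word_eq[OF chosen(1)[OF that(1)] that(2)] chosen(2)[OF that(1)] that(3) by simp
    fix u a
    assume "(u, a) \<in> needs n m R"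
    moreover obtain \<alpha> where "\<forall>c<m. e_vec a c = cent_comb m h \<beta> B u \<alpha> c"
      using sol \<open>(u, a) \<in> needs n m R\<close> unfolding cent_solution_def by fast
    ultimately have "decodes u a \<alpha>"
      by (simp add: decodes_def)
    then have "word \<alpha> \<in> bit_vec.span K"
      using K(4) by (auto simp: W_def)
    then obtain \<mu> where "word \<alpha> = (\<Sum>x\<in>K. (\<lambda>c. \<mu> x * x c))"
      using bit_vec.span_finite[OF K(2)] by auto
    then have "word \<alpha> c = (\<Sum>x\<in>K. \<mu> x * x c)" for c
      by (simp only: sum_apply_fun)
    then have "\<forall>c<m. e_vec a c = (\<Sum>x\<in>K. \<mu> x * x c) + \<alpha> (h + c) * B u c"
      using word_eq[OF \<open>decodes u a \<alpha>\<close>, THEN bit_eq_add_swap[THEN iffD1]] by simp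
    then show "\<exists>\<mu> \<gamma>. \<forall>c<m. e_vec a c = (\<Sum>x\<in>K. \<mu> x * x c) + \<gamma> c * B u c"
      by (intro exI[of _ \<mu>] exI[of _ "\<lambda>c. \<alpha> (h + c)"])
  qed
qed

lemma D_opt_le_double_cent_length:
  assumes "cent_solution n m R B h \<beta>"
    and "\<forall>(u, a) \<in> needs n m R. \<exists>v<n. B v a = 1"
  shows "D_opt n m R B \<le> 2 * h"
proof -
  obtain K :: "(nat \<Rightarrow> bit) set" and node block where
    "finite K" "card K \<le> h"
    "\<And>x. x \<in> K \<Longrightarrow> (node x, block x) \<in> needs n m R"
    "\<And>x c. x \<in> K \<Longrightarrow> c < m \<Longrightarrow> B (node x) c = 0 \<Longrightarrow> x c = e_vec (block x) c"
    "\<And>u a. (u, a) \<in> needs n m R \<Longrightarrow>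
       \<exists>\<mu> \<gamma>. \<forall>c<m. e_vec a c = (\<Sum>x\<in>K. \<mu> x * x c) + \<gamma> c * B u c"
    using assms(1) by (rule cent_solution_decodable_words) blast
  then have "D_opt n m R B \<le> 2 * card K"
    using assms(2) by (intro D_opt_le_double_of_decodable_words[where w = "\<lambda>x. x"]) auto
  with \<open>card K \<le> h\<close> show ?thesis
    by linarith
qed

theorem theorem4:
  fixes n m :: nat and R B :: "nat \<Rightarrow> nat \<Rightarrow> bit"
  assumes "EIC_problem n m R B"
    and "\<forall>(u, a) \<in> needs n m R. \<exists>v<n. B v a = 1"
  shows "D_opt n m R B \<le> 2 * C_opt n m R B"
proof -
  obtain \<beta> where "cent_solution n m R B (C_opt n m R B) \<beta>"
    using cent_solution_C_opt by blast
  then show ?thesis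
    using assms(2) by (rule D_opt_le_double_cent_length)
qed

end
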